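(* Let $\frac12<p<1$ and $f:\mathbb{Z}^+\to[0,\infty)$. In the non-uniform frog model with drift on $\mathbb{Z}$ with parameters $p$ and $f$, let $M_0=1$ and, for $j\ge1$, let $M_j$ be the number of frogs originating in $\{0,1,\dots,j-1\}$ that ever hit $x=j$. Then $\{M_j\}_{j\ge0}$ is a discrete-time, time-inhomogeneous Markov process with $M_0=1$, $M_1\sim\mathrm{Bern}\big(\frac{1-p}{p}\big)$, and for $j\ge1$, conditionally on $M_j$, $$M_{j+1}\sim\begin{cases}\mathrm{Bin}\big(M_j,\frac{1-p}{p}\big)+\mathrm{Poiss}\big(\frac{1-p}{p}f(j)\big) & \text{if } M_j\ge1,\\ 0 & \text{if } M_j=0,\end{cases}$$ where the two summands are independent.
   Context: The non-uniform frog model with drift on $\mathbb{Z}$: for each positive integer $j$, the number $\eta_j$ of sleeping frogs initially at site $j$ is Poisson with mean $f(j)$, the $\eta_j$ being independent; there are no sleeping frogs at non-positive sites. There is one active frog at the origin at time $0$. Each active frog performs a random walk on $\mathbb{Z}$ which at each step moves one unit left with probability $p$ and one unit right with probability $1-p$, independently of all other frogs. Whenever an active frog lands on a site containing sleeping frogs, they become active and start their own such walks from that site. *)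

theory Defs
  imports "HOL-Probability.Probability"
begin

definition poiss :: "real \<Rightarrow> nat pmf" where
  "poiss r = (if r = 0 then return_pmf 0 else poisson_pmf r)"

text \<open>Position on Z after n steps of a frog starting at site k whose step
  sequence is s (s m = True means the (m+1)-st step goes left).\<close>
definition frog_pos :: "nat \<Rightarrow> (nat \<Rightarrow> bool) \<Rightarrow> nat \<Rightarrow> int" where
  "frog_pos k s n = int k + (\<Sum>m<n. if s m then -1 else 1)"

definition visits :: "nat \<Rightarrow> (nat \<Rightarrow> bool) \<Rightarrow> int \<Rightarrow> bool" where
  "visits k s x \<longleftrightarrow> (\<exists>n. frog_pos k s n = x)"

text \<open>Configuration: eta j = number of sleeping frogs at site j (j >= 1);
  S (k,i) = step sequence of the i-th frog originating at site k.
  The frog (0,0) is the initially active frog at the origin.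
  woken eta S (k,i): frog (k,i) exists and is eventually activated.\<close>
inductive woken :: "(nat \<Rightarrow> nat) \<Rightarrow> (nat \<times> nat \<Rightarrow> nat \<Rightarrow> bool) \<Rightarrow> nat \<times> nat \<Rightarrow> bool"
  for eta S where
  origin: "woken eta S (0, 0)"
| wake: "woken eta S (k, i) \<Longrightarrow> visits k (S (k, i)) (int l) \<Longrightarrow> 0 < l \<Longrightarrow> i' < eta l
          \<Longrightarrow> woken eta S (l, i')"

definition frog_space :: "real \<Rightarrow> (nat \<Rightarrow> real)
    \<Rightarrow> ((nat \<Rightarrow> nat) \<times> (nat \<times> nat \<Rightarrow> nat \<Rightarrow> bool)) measure" where
  "frog_space p f =
     (PiM UNIV (\<lambda>j. measure_pmf (poiss (if j = 0 then 0 else f j))))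
     \<Otimes>\<^sub>M (PiM UNIV (\<lambda>_. PiM UNIV (\<lambda>_. measure_pmf (bernoulli_pmf p))))"

definition frog_M :: "(nat \<Rightarrow> nat) \<times> (nat \<times> nat \<Rightarrow> nat \<Rightarrow> bool) \<Rightarrow> nat \<Rightarrow> nat" where
  "frog_M \<omega> j = (if j = 0 then 1 else
     card {(k, i). k < j \<and> woken (fst \<omega>) (snd \<omega>) (k, i)
                   \<and> visits k (snd \<omega> (k, i)) (int j)})"

definition markov_chain_nat ::
  "'a measure \<Rightarrow> ('a \<Rightarrow> nat \<Rightarrow> nat) \<Rightarrow> nat pmf \<Rightarrow> (nat \<Rightarrow> nat \<Rightarrow> nat pmf) \<Rightarrow> bool" where
  "markov_chain_nat \<Omega> X init K \<longleftrightarrow>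
     (\<forall>n (m :: nat \<Rightarrow> nat).
        {\<omega> \<in> space \<Omega>. \<forall>i\<le>n. X \<omega> i = m i} \<in> sets \<Omega> \<and>
        measure \<Omega> {\<omega> \<in> space \<Omega>. \<forall>i\<le>n. X \<omega> i = m i}
          = pmf init (m 0) * (\<Prod>i<n. pmf (K i (m i)) (m (Suc i))))"

definition frog_kernel :: "real \<Rightarrow> (nat \<Rightarrow> real) \<Rightarrow> nat \<Rightarrow> nat \<Rightarrow> nat pmf" where
  "frog_kernel p f j m =
     (let q = (1 - p) / p in
      if j = 0 then map_pmf (\<lambda>b. if b then 1 else 0) (bernoulli_pmf q)
      else if m = 0 then return_pmf 0
      else map_pmf (\<lambda>(a, b). a + b) (pair_pmf (binomial_pmf m q) (poiss (q * f j))))"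

end

theory Submission
  imports Defs
begin

text \<open>Describe each frog by its maximal rightward displacement \<open>D\<close>. A walk stepping left with
  probability \<open>p > 1/2\<close> ever reaches \<open>d\<close> with probability \<open>q\<^sup>d\<close>, \<open>q = (1 - p)/p\<close>, being the
  bounded harmonic function equal to 1 at 0; so \<open>D\<close> is geometric. The frogs counted by
  \<open>M\<^sub>j\<close> carry residual excursions \<open>D - (j - k)\<close>, and by memorylessness these are i.i.d.
  geometric given their number. Passing to \<open>j + 1\<close> keeps each of them independently with
  probability \<open>q\<close>, a binomial thinning, and, if \<open>M\<^sub>j > 0\<close>, adds the \<open>Poiss(f j)\<close> frogs of site
  \<open>j\<close> thinned to \<open>Poiss(q f j)\<close>; the residuals of the survivors are again i.i.d. geometric.
  Since all displacements are independent, this yields the finite-dimensional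
  distributions of a Markov chain with the kernels \<open>frog_kernel\<close>.\<close>


section \<open>Geometric laws on the extended naturals and thinning\<close>

definition egeometric_pmf :: "real \<Rightarrow> enat pmf" where
  "egeometric_pmf q = map_pmf enat (geometric_pmf (1 - q))"

lemma pmf_egeometric_enat:
  "0 < q \<Longrightarrow> q < 1 \<Longrightarrow> pmf (egeometric_pmf q) (enat n) = q ^ n * (1 - q)"
  unfolding egeometric_pmf_def by (subst pmf_map_inj') (auto simp: inj_on_def)

lemma pmf_egeometric_infinity: "pmf (egeometric_pmf q) \<infinity> = 0"
  unfolding egeometric_pmf_def by (simp add: pmf_eq_0_set_pmf image_iff)

lemma map_Not_bernoulli_pmf:
  assumes "0 \<le> p" "p \<le> 1"
  shows "map_pmf Not (bernoulli_pmf p) = bernoulli_pmf (1 - p)"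
proof (rule pmf_eqI)
  fix b :: bool
  have "Not -` {b} = {\<not> b}" by auto
  then show "pmf (map_pmf Not (bernoulli_pmf p)) b = pmf (bernoulli_pmf (1 - p)) b"
    using assms by (cases b) (simp_all add: pmf_map measure_pmf_single)
qed

text \<open>A frog whose remaining rightward excursion is \<open>r\<close> either stops before the next
  site (\<open>None\<close>) or reaches it with remaining excursion \<open>r - 1\<close>.\<close>

definition decrement :: "enat \<Rightarrow> enat option" where
  "decrement r = (if 1 \<le> r then Some (r - 1) else None)"

lemma decrement_enat: "decrement (enat n) = (if n = 0 then None else Some (enat (n - 1)))"
  by (cases n) (auto simp: decrement_def one_enat_def zero_enat_def)

lemma egeometric_memoryless:
  assumes "0 < q" "q < 1"
  shows "map_pmf decrement (egeometric_pmf q) =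
    bernoulli_pmf q \<bind> (\<lambda>b. if b then map_pmf Some (egeometric_pmf q) else return_pmf None)"
proof -
  have "map_pmf decrement (egeometric_pmf q) =
      bernoulli_pmf (1 - q) \<bind> (\<lambda>b. if b then return_pmf None else map_pmf Some (egeometric_pmf q))"
    unfolding egeometric_pmf_def pmf.map_comp
    using assms
    by (subst geometric_bind_pmf_unfold)
       (auto simp: map_bind_pmf map_pmf_comp decrement_enat o_def intro!: bind_pmf_cong)
  also have "\<dots> = bernoulli_pmf q \<bind> (\<lambda>b. if b then map_pmf Some (egeometric_pmf q) else return_pmf None)"
    using assms by (simp flip: map_Not_bernoulli_pmf add: bind_map_pmf) (auto intro: bind_pmf_cong)
  finally show ?thesis .
qed

definition advance :: "enat list \<Rightarrow> enat list" where
  "advance rs = map (\<lambda>r. r - 1) (filter (\<lambda>r. 1 \<le> r) rs)"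

lemma advance_Nil [simp]: "advance [] = []"
  by (simp add: advance_def)

lemma advance_Cons:
  "advance (r # rs) = (case decrement r of None \<Rightarrow> advance rs | Some r' \<Rightarrow> r' # advance rs)"
  by (simp add: advance_def decrement_def)

lemma replicate_pmf_Suc_map: "replicate_pmf (Suc n) g = g \<bind> (\<lambda>x. map_pmf (Cons x) (replicate_pmf n g))"
  by (simp add: map_pmf_def)

lemma advance_replicate_egeometric:
  assumes "0 < q" "q < 1"
  shows "map_pmf advance (replicate_pmf n (egeometric_pmf q)) =
    binomial_pmf n q \<bind> (\<lambda>k. replicate_pmf k (egeometric_pmf q))"
proof (induction n)
  case 0
  then show ?case using assms by (simp add: binomial_pmf_0 bind_return_pmf)
next
  case (Suc n)
  define g where "g = egeometric_pmf q"
  define F where "F = map_pmf advance (replicate_pmf n g)"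
  have IH: "F = binomial_pmf n q \<bind> (\<lambda>k. replicate_pmf k g)"
    using Suc unfolding F_def g_def .
  have "map_pmf advance (replicate_pmf (Suc n) g) =
      map_pmf decrement g \<bind> (\<lambda>r. map_pmf (\<lambda>rs. case r of None \<Rightarrow> rs | Some r' \<Rightarrow> r' # rs) F)"
    unfolding replicate_pmf_Suc_map F_def map_bind_pmf bind_map_pmf
    by (simp add: pmf.map_comp o_def advance_Cons)
  also have "\<dots> = bernoulli_pmf q \<bind> (\<lambda>b. if b then g \<bind> (\<lambda>y. map_pmf (Cons y) F) else F)"
    unfolding g_def egeometric_memoryless[OF assms]
    by (simp add: bind_assoc_pmf) (auto intro!: bind_pmf_cong simp: bind_map_pmf bind_return_pmf pmf.map_id)
  also have "\<dots> = bernoulli_pmf q \<bind>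
      (\<lambda>b. binomial_pmf n q \<bind> (\<lambda>k. replicate_pmf ((if b then 1 else 0) + k) g))"
  proof (intro bind_pmf_cong refl)
    fix b :: bool
    have "g \<bind> (\<lambda>y. map_pmf (Cons y) F) =
        binomial_pmf n q \<bind> (\<lambda>k. g \<bind> (\<lambda>y. map_pmf (Cons y) (replicate_pmf k g)))"
      unfolding IH map_bind_pmf by (rule bind_commute_pmf)
    then show "(if b then g \<bind> (\<lambda>y. map_pmf (Cons y) F) else F) =
        binomial_pmf n q \<bind> (\<lambda>k. replicate_pmf ((if b then 1 else 0) + k) g)"
      by (simp add: IH replicate_pmf_Suc_map del: replicate_pmf.simps)
  qed
  also have "\<dots> = binomial_pmf (Suc n) q \<bind> (\<lambda>k. replicate_pmf k g)"
    using assms by (simp add: binomial_pmf_Suc bind_assoc_pmf bind_return_pmf)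
  finally show ?case unfolding g_def .
qed

lemma poisson_binomial_sums:
  fixes r q :: real
  shows "(\<lambda>e. r ^ e / fact e * exp (- r) * (real (e choose k) * q ^ k * (1 - q) ^ (e - k)))
           sums ((q * r) ^ k / fact k * exp (- (q * r)))"
proof -
  txt \<open>The terms with \<open>e < k\<close> vanish; after shifting by \<open>k\<close> the series is exponential.\<close>
  define C where "C = exp (- r) * (r * q) ^ k / fact k"
  have "(\<lambda>t. C * ((r * (1 - q)) ^ t / fact t)) sums (C * exp (r * (1 - q)))"
    using exp_converges[of "r * (1 - q)"] by (intro sums_mult) (simp add: divide_inverse mult.commute)
  moreover have "C * ((r * (1 - q)) ^ t / fact t) =
      r ^ (t + k) / fact (t + k) * exp (- r) * (real ((t + k) choose k) * q ^ k * (1 - q) ^ (t + k - k))" for t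
    unfolding C_def binomial_fact[of k "t + k", OF le_add2]
    by (simp add: power_add divide_simps mult_ac)
  moreover have "C * exp (r * (1 - q)) = (q * r) ^ k / fact k * exp (- (q * r))"
    unfolding C_def by (simp add: mult_exp_exp algebra_simps)
  ultimately show ?thesis
    by (subst sums_zero_iff_shift[where n = k, symmetric]) simp_all
qed

lemma poisson_binomial_thinning:
  assumes "0 < r" "0 < q" "q < 1"
  shows "poisson_pmf r \<bind> (\<lambda>e. binomial_pmf e q) = poisson_pmf (q * r)"
proof (rule pmf_eqI)
  fix k
  have "ennreal (pmf (poisson_pmf r \<bind> (\<lambda>e. binomial_pmf e q)) k) =
      (\<Sum>e. ennreal (r ^ e / fact e * exp (- r) * (real (e choose k) * q ^ k * (1 - q) ^ (e - k))))"
    using assms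
    by (simp add: ennreal_pmf_bind nn_integral_measure_pmf nn_integral_count_space_nat
        flip: ennreal_mult')
  also have "\<dots> = ennreal ((q * r) ^ k / fact k * exp (- (q * r)))"
    using assms by (intro suminf_ennreal_eq poisson_binomial_sums) auto
  also have "\<dots> = ennreal (pmf (poisson_pmf (q * r)) k)"
    using assms by simp
  finally show "pmf (poisson_pmf r \<bind> (\<lambda>e. binomial_pmf e q)) k = pmf (poisson_pmf (q * r)) k"
    by simp
qed

lemma poiss_binomial_thinning:
  assumes "0 \<le> r" "0 < q" "q < 1"
  shows "poiss r \<bind> (\<lambda>e. binomial_pmf e q) = poiss (q * r)"
  using assms poisson_binomial_thinning[of r q]
  by (cases "r = 0") (simp_all add: poiss_def bind_return_pmf binomial_pmf_0)


section \<open>Hitting probabilities of a walk with drift\<close>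

definition walk_step :: "bool \<Rightarrow> int" where
  "walk_step b = (if b then -1 else 1)"

definition walk :: "bool stream \<Rightarrow> nat \<Rightarrow> int" where
  "walk \<omega> n = (\<Sum>m<n. walk_step (\<omega> !! m))"

definition hits_zero :: "int \<Rightarrow> bool stream \<Rightarrow> bool" where
  "hits_zero x \<omega> \<longleftrightarrow> (\<exists>n. x + walk \<omega> n = 0)"

definition hits_zero_within :: "nat \<Rightarrow> int \<Rightarrow> bool stream \<Rightarrow> bool" where
  "hits_zero_within N x \<omega> \<longleftrightarrow> (\<exists>n\<le>N. x + walk \<omega> n = 0)"

abbreviation bernoulli_stream :: "real \<Rightarrow> bool stream measure" where
  "bernoulli_stream p \<equiv> stream_space (measure_pmf (bernoulli_pmf p))"

lemma walk_0 [simp]: "walk \<omega> 0 = 0"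
  by (simp add: walk_def)

lemma walk_Stream: "walk (b ## \<omega>) (Suc n) = walk_step b + walk \<omega> n"
  by (simp add: walk_def sum.lessThan_Suc_shift del: sum.lessThan_Suc)

lemma hits_zero_within_Stream:
  assumes "x \<noteq> 0"
  shows "hits_zero_within (Suc N) x (b ## \<omega>) \<longleftrightarrow> hits_zero_within N (x + walk_step b) \<omega>"
proof
  assume "hits_zero_within (Suc N) x (b ## \<omega>)"
  then obtain n where n: "n \<le> Suc N" "x + walk (b ## \<omega>) n = 0" by (auto simp: hits_zero_within_def)
  with assms obtain n' where "n = Suc n'" by (cases n) auto
  with n show "hits_zero_within N (x + walk_step b) \<omega>"
    by (auto simp: hits_zero_within_def walk_Stream algebra_simps)
next
  assume "hits_zero_within N (x + walk_step b) \<omega>"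
  then obtain n where n: "n \<le> N" "x + walk_step b + walk \<omega> n = 0" by (auto simp: hits_zero_within_def)
  then have "x + walk (b ## \<omega>) (Suc n) = 0" by (simp add: walk_Stream algebra_simps)
  with n show "hits_zero_within (Suc N) x (b ## \<omega>)" by (auto simp: hits_zero_within_def)
qed

lemma hits_zero_iff_within: "hits_zero x \<omega> \<longleftrightarrow> (\<exists>N. hits_zero_within N x \<omega>)"
  by (auto simp: hits_zero_def hits_zero_within_def)

lemma hits_zero_Stream:
  assumes "x \<noteq> 0"
  shows "hits_zero x (b ## \<omega>) \<longleftrightarrow> hits_zero (x + walk_step b) \<omega>"
proof -
  have "hits_zero_within N x \<omega>' \<Longrightarrow> hits_zero_within (Suc N) x \<omega>'" for N \<omega>'
    by (auto simp: hits_zero_within_def le_Suc_eq)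
  then show ?thesis
    unfolding hits_zero_iff_within using hits_zero_within_Stream[OF assms] by blast
qed

lemma walk_stake: "walk \<omega> n = sum_list (map walk_step (stake n \<omega>))"
  by (simp add: walk_def sum_list_sum_nth atLeast0LessThan)

lemma measurable_pred_stake: "Measurable.pred (bernoulli_stream p) (\<lambda>\<omega>. P (stake n \<omega>))"
proof -
  have "(\<lambda>\<omega>. P (stake n \<omega>)) \<in> measurable (stream_space (count_space UNIV)) (count_space UNIV)"
    by (rule measurable_compose[OF measurable_stake]) simp
  moreover have "sets (bernoulli_stream p) = sets (stream_space (count_space UNIV))"
    by (rule sets_stream_space_cong) simp
  ultimately show ?thesis by (simp cong: measurable_cong_sets)
qed

lemma measurable_hits_zero_within [measurable]:
  "Measurable.pred (bernoulli_stream p) (hits_zero_within N x)"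
  unfolding hits_zero_within_def walk_stake by (intro pred_intros_countable measurable_pred_stake)

lemma measurable_hits_zero [measurable]: "Measurable.pred (bernoulli_stream p) (hits_zero x)"
  unfolding hits_zero_def walk_stake by (intro pred_intros_countable measurable_pred_stake)

lemma prob_space_bernoulli_stream: "prob_space (bernoulli_stream p)"
  by (rule prob_space.prob_space_stream_space[OF prob_space_measure_pmf])

lemma prob_bernoulli_stream_first_step:
  assumes "0 \<le> p" "p \<le> 1" and [measurable]: "Measurable.pred (bernoulli_stream p) Q"
  shows "\<P>(\<omega> in bernoulli_stream p. Q \<omega>) =
    \<P>(\<omega> in bernoulli_stream p. Q (True ## \<omega>)) * p + \<P>(\<omega> in bernoulli_stream p. Q (False ## \<omega>)) * (1 - p)"
proof -
  have "ennreal (\<P>(\<omega> in bernoulli_stream p. Q \<omega>)) =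
      (\<integral>\<^sup>+b. ennreal (\<P>(\<omega> in bernoulli_stream p. Q (b ## \<omega>))) \<partial>measure_pmf (bernoulli_pmf p))"
    by (rule prob_space.prob_stream_space[OF prob_space_measure_pmf]) measurable
  also have "\<dots> = ennreal (\<P>(\<omega> in bernoulli_stream p. Q (True ## \<omega>)) * p
      + \<P>(\<omega> in bernoulli_stream p. Q (False ## \<omega>)) * (1 - p))"
    using assms by (simp add: ennreal_mult)
  finally show ?thesis
    using assms by (subst (asm) ennreal_inj) (auto intro!: add_nonneg_nonneg mult_nonneg_nonneg)
qed

definition drift_ratio :: "real \<Rightarrow> real" where
  "drift_ratio p = (1 - p) / p"

lemma drift_ratio_power_harmonic:
  assumes "0 < p"
  shows "drift_ratio p ^ Suc k = p * drift_ratio p ^ Suc (Suc k) + (1 - p) * drift_ratio p ^ k"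
proof -
  have "drift_ratio p = p * drift_ratio p ^ 2 + (1 - p)"
    using assms by (simp add: drift_ratio_def power2_eq_square field_simps)
  then have "drift_ratio p ^ k * drift_ratio p = drift_ratio p ^ k * (p * drift_ratio p ^ 2 + (1 - p))"
    by simp
  then show ?thesis by (simp add: algebra_simps power2_eq_square)
qed

locale left_drift =
  fixes p :: real
  assumes half_less_p: "1 / 2 < p" and p_less_1: "p < 1"
begin

abbreviation q :: real where
  "q \<equiv> drift_ratio p"

lemma q_pos: "0 < q" and q_less_1: "q < 1"
  using half_less_p p_less_1 by (auto simp: drift_ratio_def field_simps)

lemma p_bounds: "0 \<le> p" "p \<le> 1"
  using half_less_p p_less_1 by auto

lemma bounded_harmonic_eq_power:
  fixes a :: "nat \<Rightarrow> real"
  assumes a0: "a 0 = 1"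
    and harmonic: "\<And>k. a (Suc k) = p * a (Suc (Suc k)) + (1 - p) * a k"
    and bounds: "\<And>k. 0 \<le> a k \<and> a k \<le> q ^ k"
  shows "a k = q ^ k"
proof -
  txt \<open>The difference \<open>b\<close> of two harmonic functions has geometric increments;
    as \<open>b 0 = 0\<close> and \<open>b k \<rightarrow> 0\<close>, its first increment must vanish.\<close>
  define b where "b k = a k - q ^ k" for k
  define d where "d k = b (Suc k) - b k" for k
  have "p * d (Suc k) = (1 - p) * d k" for k
    using harmonic[of k] drift_ratio_power_harmonic[of p k] half_less_p
    by (simp add: b_def d_def algebra_simps)
  then have d_Suc: "d (Suc k) = q * d k" for k
    using half_less_p by (simp add: drift_ratio_def field_simps)
  have b_sum: "b k = d 0 * (\<Sum>i<k. q ^ i)" for k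
  proof (induction k)
    case (Suc k)
    have "d k = q ^ k * d 0" by (induction k) (simp_all add: d_Suc)
    then show ?case using Suc by (simp add: d_def algebra_simps)
  qed (simp add: b_def a0)
  have "d 0 = 0"
  proof (rule ccontr)
    assume "d 0 \<noteq> 0"
    moreover have "d 0 \<le> 0" using bounds[of 1] b_sum[of 1] by (simp add: b_def)
    ultimately have d0: "d 0 < 0" by simp
    obtain k where k: "q ^ k < - d 0" using real_arch_pow_inv[of "- d 0" q] d0 q_less_1 by auto
    have "1 \<le> (\<Sum>i<Suc k. q ^ i)"
      using q_pos by (simp add: sum.lessThan_Suc_shift del: sum.lessThan_Suc) (simp add: sum_nonneg)
    then have "b (Suc k) \<le> d 0" using b_sum[of "Suc k"] d0 mult_left_mono_neg[of 1 _ "d 0"] by simp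
    moreover have "- (q ^ Suc k) \<le> b (Suc k)" using bounds[of "Suc k"] by (simp add: b_def)
    moreover have "q ^ Suc k \<le> q ^ k" using q_pos q_less_1 by (simp add: power_decreasing)
    ultimately show False using k by linarith
  qed
  then show ?thesis using b_sum[of k] by (simp add: b_def)
qed

lemma prob_hits_zero_within_step:
  "x \<noteq> 0 \<Longrightarrow> \<P>(\<omega> in bernoulli_stream p. hits_zero_within (Suc N) x \<omega>) =
    \<P>(\<omega> in bernoulli_stream p. hits_zero_within N (x - 1) \<omega>) * p
    + \<P>(\<omega> in bernoulli_stream p. hits_zero_within N (x + 1) \<omega>) * (1 - p)"
  using prob_bernoulli_stream_first_step[OF p_bounds, of "hits_zero_within (Suc N) x"]
  by (simp add: hits_zero_within_Stream walk_step_def)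

lemma prob_hits_zero_step:
  "x \<noteq> 0 \<Longrightarrow> \<P>(\<omega> in bernoulli_stream p. hits_zero x \<omega>) =
    \<P>(\<omega> in bernoulli_stream p. hits_zero (x - 1) \<omega>) * p
    + \<P>(\<omega> in bernoulli_stream p. hits_zero (x + 1) \<omega>) * (1 - p)"
  using prob_bernoulli_stream_first_step[OF p_bounds, of "hits_zero x"]
  by (simp add: hits_zero_Stream walk_step_def)

lemma prob_hits_zero_within_le:
  "\<P>(\<omega> in bernoulli_stream p. hits_zero_within N (- int k) \<omega>) \<le> q ^ k"
proof (induction N arbitrary: k)
  case 0
  then show ?case
    using prob_space.prob_le_1[OF prob_space_bernoulli_stream] q_pos
    by (cases k) (simp_all add: hits_zero_within_def)
next
  case (Suc N)
  show ?case
  proof (cases k)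
    case 0
    then show ?thesis using prob_space.prob_le_1[OF prob_space_bernoulli_stream] by simp
  next
    case (Suc k')
    have "\<P>(\<omega> in bernoulli_stream p. hits_zero_within (Suc N) (- int k) \<omega>) =
        \<P>(\<omega> in bernoulli_stream p. hits_zero_within N (- int (Suc k)) \<omega>) * p
        + \<P>(\<omega> in bernoulli_stream p. hits_zero_within N (- int k') \<omega>) * (1 - p)"
      using prob_hits_zero_within_step[of "- int k" N] Suc by (simp add: algebra_simps)
    also have "\<dots> \<le> q ^ Suc k * p + q ^ k' * (1 - p)"
      using p_bounds by (intro add_mono mult_right_mono Suc.IH) auto
    also have "\<dots> = q ^ k"
      using drift_ratio_power_harmonic[of p k'] half_less_p Suc by (simp add: algebra_simps)
    finally show ?thesis .
  qed
qed

lemma prob_hits_zero_le: "\<P>(\<omega> in bernoulli_stream p. hits_zero (- int k) \<omega>) \<le> q ^ k"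
proof -
  interpret prob_space "bernoulli_stream p" by (rule prob_space_bernoulli_stream)
  define A where "A N = {\<omega> \<in> space (bernoulli_stream p). hits_zero_within N (- int k) \<omega>}" for N
  have "(\<lambda>N. measure (bernoulli_stream p) (A N)) \<longlonglongrightarrow> measure (bernoulli_stream p) (\<Union>N. A N)"
  proof (rule finite_Lim_measure_incseq)
    show "range A \<subseteq> sets (bernoulli_stream p)" unfolding A_def by (intro image_subsetI) measurable
    show "incseq A" unfolding A_def incseq_def hits_zero_within_def by (auto intro: order_trans)
  qed
  then have "measure (bernoulli_stream p) (\<Union>N. A N) \<le> q ^ k"
    by (rule LIMSEQ_le_const2) (auto simp: A_def intro: prob_hits_zero_within_le)
  moreover have "(\<Union>N. A N) = {\<omega> \<in> space (bernoulli_stream p). hits_zero (- int k) \<omega>}"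
    unfolding A_def by (auto simp: hits_zero_def hits_zero_within_def)
  ultimately show ?thesis by simp
qed

lemma prob_hits_zero: "\<P>(\<omega> in bernoulli_stream p. hits_zero (- int k) \<omega>) = q ^ k"
proof (rule bounded_harmonic_eq_power)
  show "\<P>(\<omega> in bernoulli_stream p. hits_zero (- int 0) \<omega>) = 1"
    using prob_space.prob_space[OF prob_space_bernoulli_stream]
    by (simp add: hits_zero_def exI[of _ 0])
  fix k
  show "\<P>(\<omega> in bernoulli_stream p. hits_zero (- int (Suc k)) \<omega>) =
      p * \<P>(\<omega> in bernoulli_stream p. hits_zero (- int (Suc (Suc k))) \<omega>)
      + (1 - p) * \<P>(\<omega> in bernoulli_stream p. hits_zero (- int k) \<omega>)"
    using prob_hits_zero_step[of "- int (Suc k)"] by (simp add: algebra_simps)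
  show "0 \<le> \<P>(\<omega> in bernoulli_stream p. hits_zero (- int k) \<omega>) \<and>
      \<P>(\<omega> in bernoulli_stream p. hits_zero (- int k) \<omega>) \<le> q ^ k"
    using prob_hits_zero_le by simp
qed

end


section \<open>The maximal rightward displacement of a frog\<close>

abbreviation bernoulli_seq :: "real \<Rightarrow> (nat \<Rightarrow> bool) measure" where
  "bernoulli_seq p \<equiv> PiM UNIV (\<lambda>_::nat. measure_pmf (bernoulli_pmf p))"

lemma frog_pos_0 [simp]: "frog_pos k s 0 = int k"
  by (simp add: frog_pos_def)

lemma frog_pos_Suc: "frog_pos k s (Suc n) = frog_pos k s n + (if s n then -1 else 1)"
  by (simp add: frog_pos_def)

lemma frog_pos_eq_walk: "frog_pos k s n = int k + walk (to_stream s) n"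
  by (simp add: frog_pos_def walk_def walk_step_def to_stream_def)

lemma frog_pos_intermediate:
  assumes "int k \<le> z" "z \<le> frog_pos k s n"
  shows "\<exists>m\<le>n. frog_pos k s m = z"
  using assms
proof (induction n)
  case (Suc n)
  show ?case
  proof (cases "z \<le> frog_pos k s n")
    case True
    then show ?thesis using Suc by (meson le_SucI)
  next
    case False
    then have "frog_pos k s (Suc n) = z" using Suc.prems by (auto simp: frog_pos_Suc split: if_splits)
    then show ?thesis by blast
  qed
qed auto

lemma visits_intermediate: "visits k s y \<Longrightarrow> int k \<le> z \<Longrightarrow> z \<le> y \<Longrightarrow> visits k s z"
  unfolding visits_def using frog_pos_intermediate by metis

lemma visits_shift: "k \<le> j \<Longrightarrow> visits k s (int j) \<longleftrightarrow> visits 0 s (int (j - k))"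
  by (auto simp: visits_def frog_pos_eq_walk algebra_simps)

lemma visits_iff_hits_zero: "visits 0 s (int d) \<longleftrightarrow> hits_zero (- int d) (to_stream s)"
  by (auto simp: visits_def hits_zero_def frog_pos_eq_walk)

lemma measurable_visits [measurable]: "Measurable.pred (bernoulli_seq p) (\<lambda>s. visits 0 s (int d))"
  unfolding visits_iff_hits_zero by measurable

lemma (in left_drift) prob_visits:
  "measure (bernoulli_seq p) {s \<in> space (bernoulli_seq p). visits 0 s (int d)} = q ^ d"
proof -
  have "measure (bernoulli_seq p) {s \<in> space (bernoulli_seq p). visits 0 s (int d)} =
      measure (bernoulli_seq p)
        (to_stream -` {\<omega> \<in> space (bernoulli_stream p). hits_zero (- int d) \<omega>} \<inter> space (bernoulli_seq p))"
    by (rule arg_cong[where f = "measure (bernoulli_seq p)"])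
       (auto simp: visits_iff_hits_zero space_stream_space)
  also have "\<dots> = measure (distr (bernoulli_seq p) (bernoulli_stream p) to_stream)
      {\<omega> \<in> space (bernoulli_stream p). hits_zero (- int d) \<omega>}"
    by (rule measure_distr[symmetric]) measurable
  also have "\<dots> = q ^ d"
    using prob_hits_zero[of d] stream_space_eq_distr by metis
  finally show ?thesis .
qed

definition max_displacement :: "(nat \<Rightarrow> bool) \<Rightarrow> enat" where
  "max_displacement s = (SUP n. enat (nat (frog_pos 0 s n)))"

lemma visits_iff_le_max_displacement: "visits 0 s (int d) \<longleftrightarrow> enat d \<le> max_displacement s"
proof
  assume "visits 0 s (int d)"
  then obtain n where "frog_pos 0 s n = int d" by (auto simp: visits_def)
  then have "enat d = enat (nat (frog_pos 0 s n))" by simp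
  also have "\<dots> \<le> max_displacement s" unfolding max_displacement_def by (rule SUP_upper) simp
  finally show "enat d \<le> max_displacement s" .
next
  assume le: "enat d \<le> max_displacement s"
  show "visits 0 s (int d)"
  proof (cases d)
    case 0
    then show ?thesis by (auto simp: visits_def intro: exI[of _ 0])
  next
    case (Suc d')
    then have "enat d' < max_displacement s" using le by (simp add: Suc_ile_eq)
    then obtain n where "enat d' < enat (nat (frog_pos 0 s n))"
      unfolding max_displacement_def less_SUP_iff by auto
    then have "int d \<le> frog_pos 0 s n" using Suc by auto
    then show ?thesis using visits_intermediate[of 0 s "frog_pos 0 s n" "int d"] by (auto simp: visits_def)
  qed
qed

lemma max_displacement_eq_iff:
  "max_displacement s = v \<longleftrightarrow> (case v of
      enat d \<Rightarrow> visits 0 s (int d) \<and> \<not> visits 0 s (int (Suc d))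
    | \<infinity> \<Rightarrow> (\<forall>d. visits 0 s (int d)))"
  unfolding visits_iff_le_max_displacement
  by (cases v; cases "max_displacement s") (auto simp: not_le)

lemma measurable_max_displacement_eq [measurable]:
  "Measurable.pred (bernoulli_seq p) (\<lambda>s. max_displacement s = v)"
  unfolding max_displacement_eq_iff by (cases v) (simp_all del: of_nat_Suc)

lemma (in left_drift) prob_max_displacement_eq:
  "measure (bernoulli_seq p) {s \<in> space (bernoulli_seq p). max_displacement s = v} =
    pmf (egeometric_pmf q) v"
proof -
  interpret prob_space "bernoulli_seq p" by (intro prob_space_PiM prob_space_measure_pmf)
  let ?V = "\<lambda>d. {s \<in> space (bernoulli_seq p). visits 0 s (int d)}"
  show ?thesis
  proof (cases v)
    case (enat d)
    have "{s \<in> space (bernoulli_seq p). max_displacement s = v} = ?V d - ?V (Suc d)"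
      using enat by (auto simp: max_displacement_eq_iff)
    moreover have "?V (Suc d) \<subseteq> ?V d"
      using visits_intermediate[of 0 _ "int (Suc d)" "int d"] by auto
    ultimately have "measure (bernoulli_seq p) {s \<in> space (bernoulli_seq p). max_displacement s = v} =
        q ^ d - q ^ Suc d"
      by (simp add: finite_measure_Diff prob_visits del: of_nat_Suc)
    then show ?thesis using enat q_pos q_less_1 by (simp add: pmf_egeometric_enat algebra_simps)
  next
    case infinity
    have "measure (bernoulli_seq p) {s \<in> space (bernoulli_seq p). max_displacement s = v} \<le> q ^ d" for d
      using finite_measure_mono[of "{s \<in> space (bernoulli_seq p). max_displacement s = v}" "?V d"]
      by (auto simp: infinity max_displacement_eq_iff prob_visits)
    then have "measure (bernoulli_seq p) {s \<in> space (bernoulli_seq p). max_displacement s = v} \<le> 0"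
      using q_pos q_less_1 by (intro LIMSEQ_le_const[OF LIMSEQ_power_zero]) auto
    then show ?thesis using infinity by (simp add: pmf_egeometric_infinity antisym)
  qed
qed


section \<open>Residual excursions as a Markov chain of lists\<close>

text \<open>The state at site \<open>j\<close> is the list of residual excursions \<open>D - (j - k)\<close> of the
  frogs counted by \<open>M\<^sub>j\<close>, where \<open>k\<close> is the origin of a frog and \<open>D\<close> its maximal rightward
  displacement. Frogs of site \<open>j\<close> join only if some frog has reached \<open>j\<close>.\<close>

definition next_residuals :: "nat \<Rightarrow> enat list \<Rightarrow> enat list \<Rightarrow> enat list" where
  "next_residuals j R L = advance R @ (if 0 < j \<and> R \<noteq> [] then advance L else [])"

lemma next_residuals_Nil: "next_residuals j [] = (\<lambda>_. [])"
  by (auto simp: next_residuals_def)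

definition site_law :: "real \<Rightarrow> (nat \<Rightarrow> real) \<Rightarrow> nat \<Rightarrow> enat list pmf" where
  "site_law p f j = (if j = 0 then return_pmf []
     else poiss (f j) \<bind> (\<lambda>e. replicate_pmf e (egeometric_pmf (drift_ratio p))))"

primrec sites_law :: "real \<Rightarrow> (nat \<Rightarrow> real) \<Rightarrow> nat \<Rightarrow> nat \<Rightarrow> enat list list pmf" where
  "sites_law p f j 0 = return_pmf []"
| "sites_law p f j (Suc n) = map_pmf (\<lambda>(L, Ls). L # Ls) (pair_pmf (site_law p f j) (sites_law p f (Suc j) n))"

primrec residual_counts :: "nat \<Rightarrow> enat list \<Rightarrow> enat list list \<Rightarrow> nat list" where
  "residual_counts j R [] = [length R]"
| "residual_counts j R (L # Ls) = length R # residual_counts (Suc j) (next_residuals j R L) Ls"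

primrec path_pmf :: "(nat \<Rightarrow> nat \<Rightarrow> nat pmf) \<Rightarrow> nat \<Rightarrow> nat \<Rightarrow> nat \<Rightarrow> nat list pmf" where
  "path_pmf K j c 0 = return_pmf [c]"
| "path_pmf K j c (Suc n) = K j c \<bind> (\<lambda>c'. map_pmf (Cons c) (path_pmf K (Suc j) c' n))"

lemma pmf_map_Cons: "pmf (map_pmf (Cons x) M) (y # ys) = (if x = y then pmf M ys else 0)"
proof (cases "x = y")
  case False
  then have "Cons x -` {y # ys} = {}" by auto
  then show ?thesis using False by (simp add: pmf_map)
qed (simp add: pmf_map_inj')

lemma pmf_path_pmf:
  "pmf (path_pmf K j c n) (map m [0..<Suc n]) =
     pmf (return_pmf c) (m 0) * (\<Prod>i<n. pmf (K (j + i) (m i)) (m (Suc i)))"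
proof (induction n arbitrary: j c m)
  case 0
  then show ?case by (simp add: indicator_def)
next
  case (Suc n)
  have split: "map m [0..<Suc (Suc n)] = m 0 # map (\<lambda>i. m (Suc i)) [0..<Suc n]"
    by (simp add: map_upt_Suc del: upt_Suc)
  have "pmf (path_pmf K j c (Suc n)) (map m [0..<Suc (Suc n)]) =
      (\<integral>c'. (if m 0 = c then pmf (path_pmf K (Suc j) c' n) (map (\<lambda>i. m (Suc i)) [0..<Suc n]) else 0)
        \<partial>measure_pmf (K j c))"
    unfolding split by (simp add: pmf_bind pmf_map_Cons eq_commute del: upt_Suc)
  also have "\<dots> = (\<integral>c'. pmf (return_pmf c) (m 0) * (indicator {m 1} c' *
        (\<Prod>i<n. pmf (K (Suc j + i) (m (Suc i))) (m (Suc (Suc i))))) \<partial>measure_pmf (K j c))"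
    using Suc.IH[of "Suc j" _ "\<lambda>i. m (Suc i)"]
    by (intro Bochner_Integration.integral_cong) (auto simp: indicator_def simp del: upt_Suc)
  also have "\<dots> = pmf (return_pmf c) (m 0) * (pmf (K j c) (m 1) *
      (\<Prod>i<n. pmf (K (Suc j + i) (m (Suc i))) (m (Suc (Suc i)))))"
    by (simp add: measure_pmf_single)
  finally show ?case
    by (cases "m 0 = c") (simp_all add: prod.lessThan_Suc_shift del: prod.lessThan_Suc)
qed

lemma frog_kernel_drift_ratio:
  "frog_kernel p f j m =
    (if j = 0 then map_pmf (\<lambda>b. if b then 1 else 0) (bernoulli_pmf (drift_ratio p))
     else if m = 0 then return_pmf 0
     else map_pmf (\<lambda>(a, b). a + b)
       (pair_pmf (binomial_pmf m (drift_ratio p)) (poiss (drift_ratio p * f j))))"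
  by (simp add: frog_kernel_def drift_ratio_def Let_def)

context left_drift
begin

lemma advance_site_law:
  assumes "0 < j" "0 \<le> f j"
  shows "map_pmf advance (site_law p f j) = poiss (q * f j) \<bind> (\<lambda>k. replicate_pmf k (egeometric_pmf q))"
proof -
  have "map_pmf advance (site_law p f j) =
      poiss (f j) \<bind> (\<lambda>e. binomial_pmf e q \<bind> (\<lambda>k. replicate_pmf k (egeometric_pmf q)))"
    using assms q_pos q_less_1 by (simp add: site_law_def map_bind_pmf advance_replicate_egeometric)
  then show ?thesis
    using assms q_pos q_less_1 by (simp add: poiss_binomial_thinning flip: bind_assoc_pmf)
qed

lemma advance_append_law:
  assumes "0 < j" "0 \<le> f j"
  shows "replicate_pmf c (egeometric_pmf q) \<bind>
      (\<lambda>R. site_law p f j \<bind> (\<lambda>L. return_pmf (advance R @ advance L))) =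
    map_pmf (\<lambda>(a, b). a + b) (pair_pmf (binomial_pmf c q) (poiss (q * f j))) \<bind>
      (\<lambda>c'. replicate_pmf c' (egeometric_pmf q))"
    (is "?lhs = _")
proof -
  define g where "g = egeometric_pmf q"
  have "?lhs = map_pmf advance (replicate_pmf c g) \<bind>
      (\<lambda>A. map_pmf advance (site_law p f j) \<bind> (\<lambda>B. return_pmf (A @ B)))"
    by (simp add: g_def bind_map_pmf)
  also have "\<dots> = binomial_pmf c q \<bind> (\<lambda>a. poiss (q * f j) \<bind> (\<lambda>b.
      replicate_pmf a g \<bind> (\<lambda>A. replicate_pmf b g \<bind> (\<lambda>B. return_pmf (A @ B)))))"
    using assms q_pos q_less_1
    by (simp add: g_def advance_replicate_egeometric advance_site_law bind_assoc_pmf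
        bind_commute_pmf[of "replicate_pmf _ _" "poiss (q * f j)"])
  also have "\<dots> = binomial_pmf c q \<bind> (\<lambda>a. poiss (q * f j) \<bind> (\<lambda>b. replicate_pmf (a + b) g))"
    by (simp add: replicate_pmf_distrib)
  finally show ?thesis
    by (simp add: g_def pair_pmf_def bind_map_pmf bind_assoc_pmf bind_return_pmf)
qed

text \<open>The invariant behind the proposition: given its length, the residual list is i.i.d.
  \<open>egeometric_pmf q\<close>, and one step preserves this while moving the length by \<open>frog_kernel\<close>.\<close>

lemma residual_step_law:
  assumes "0 < j \<or> c = 1" "0 < j \<Longrightarrow> 0 \<le> f j"
  shows "replicate_pmf c (egeometric_pmf q) \<bind> (\<lambda>R. map_pmf (next_residuals j R) (site_law p f j)) =
    frog_kernel p f j c \<bind> (\<lambda>c'. replicate_pmf c' (egeometric_pmf q))"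
proof (cases "j = 0")
  case True
  have "replicate_pmf c (egeometric_pmf q) \<bind> (\<lambda>R. map_pmf (next_residuals j R) (site_law p f j)) =
      map_pmf advance (replicate_pmf 1 (egeometric_pmf q))"
    using True assms by (simp add: site_law_def next_residuals_def map_pmf_def)
  also have "\<dots> = binomial_pmf 1 q \<bind> (\<lambda>k. replicate_pmf k (egeometric_pmf q))"
    using q_pos q_less_1 by (rule advance_replicate_egeometric)
  also have "binomial_pmf 1 q = map_pmf (\<lambda>b. if b then 1 else 0) (bernoulli_pmf q)"
    using q_pos q_less_1 by (simp add: binomial_pmf_Suc binomial_pmf_0 bind_return_pmf map_pmf_def)
  finally show ?thesis
    using True by (simp add: frog_kernel_drift_ratio)
next
  case j: False
  show ?thesis
  proof (cases "c = 0")
    case True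
    then show ?thesis using j by (simp add: frog_kernel_drift_ratio next_residuals_Nil bind_return_pmf)
  next
    case False
    have "replicate_pmf c (egeometric_pmf q) \<bind> (\<lambda>R. map_pmf (next_residuals j R) (site_law p f j)) =
        replicate_pmf c (egeometric_pmf q) \<bind>
          (\<lambda>R. site_law p f j \<bind> (\<lambda>L. return_pmf (advance R @ advance L)))"
      using j False
      by (intro bind_pmf_cong) (auto simp: set_replicate_pmf next_residuals_def map_pmf_def)
    then show ?thesis
      using j False assms by (simp add: advance_append_law frog_kernel_drift_ratio)
  qed
qed

lemma residual_counts_law:
  assumes "\<forall>j>0. 0 \<le> f j" and "0 < j \<or> c = 1"
  shows "replicate_pmf c (egeometric_pmf q) \<bind> (\<lambda>R. map_pmf (residual_counts j R) (sites_law p f j n)) =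
    path_pmf (frog_kernel p f) j c n"
  using assms(2)
proof (induction n arbitrary: j c)
  case 0
  have "replicate_pmf c (egeometric_pmf q) \<bind> (\<lambda>R. map_pmf (residual_counts j R) (sites_law p f j 0)) =
      replicate_pmf c (egeometric_pmf q) \<bind> (\<lambda>R. return_pmf [c])"
    by (intro bind_pmf_cong) (auto simp: set_replicate_pmf)
  then show ?case by simp
next
  case (Suc n)
  define g where "g = egeometric_pmf q"
  have "replicate_pmf c g \<bind> (\<lambda>R. map_pmf (residual_counts j R) (sites_law p f j (Suc n))) =
      replicate_pmf c g \<bind> (\<lambda>R. site_law p f j \<bind> (\<lambda>L.
        map_pmf (\<lambda>Ls. c # residual_counts (Suc j) (next_residuals j R L) Ls) (sites_law p f (Suc j) n)))"
    by (intro bind_pmf_cong)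
       (auto simp: set_replicate_pmf pair_pmf_def map_bind_pmf map_pmf_def bind_assoc_pmf bind_return_pmf)
  also have "\<dots> = map_pmf (Cons c)
      ((replicate_pmf c g \<bind> (\<lambda>R. map_pmf (next_residuals j R) (site_law p f j))) \<bind>
        (\<lambda>R'. map_pmf (residual_counts (Suc j) R') (sites_law p f (Suc j) n)))"
    by (simp add: map_bind_pmf bind_assoc_pmf bind_map_pmf pmf.map_comp o_def)
  also have "\<dots> = map_pmf (Cons c) (frog_kernel p f j c \<bind> (\<lambda>c'. path_pmf (frog_kernel p f) (Suc j) c' n))"
    using Suc assms(1) by (simp add: g_def residual_step_law bind_assoc_pmf)
  finally show ?case
    by (simp add: g_def map_bind_pmf)
qed

end


section \<open>The counts \<open>M\<^sub>j\<close> as lengths of residual lists\<close>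

definition hitters :: "(nat \<Rightarrow> nat) \<Rightarrow> (nat \<times> nat \<Rightarrow> nat \<Rightarrow> bool) \<Rightarrow> nat \<Rightarrow> (nat \<times> nat) set" where
  "hitters eta S j = {(k, i). k < j \<and> woken eta S (k, i) \<and> visits k (S (k, i)) (int j)}"

definition counted :: "(nat \<Rightarrow> nat) \<Rightarrow> (nat \<times> nat \<Rightarrow> nat \<Rightarrow> bool) \<Rightarrow> nat \<Rightarrow> (nat \<times> nat) set" where
  "counted eta S j = (if j = 0 then {(0, 0)} else hitters eta S j)"

definition residual :: "(nat \<times> nat \<Rightarrow> nat \<Rightarrow> bool) \<Rightarrow> nat \<Rightarrow> nat \<times> nat \<Rightarrow> enat" where
  "residual S j x = max_displacement (S x) - enat (j - fst x)"

definition site_displacements :: "(nat \<Rightarrow> nat) \<Rightarrow> (nat \<times> nat \<Rightarrow> nat \<Rightarrow> bool) \<Rightarrow> nat \<Rightarrow> enat list" where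
  "site_displacements eta S k =
    (if k = 0 then [] else map (\<lambda>i. max_displacement (S (k, i))) [0..<eta k])"

primrec residuals :: "(nat \<Rightarrow> nat) \<Rightarrow> (nat \<times> nat \<Rightarrow> nat \<Rightarrow> bool) \<Rightarrow> nat \<Rightarrow> enat list" where
  "residuals eta S 0 = [max_displacement (S (0, 0))]"
| "residuals eta S (Suc j) = next_residuals j (residuals eta S j) (site_displacements eta S j)"

lemma woken_passes_left:
  assumes "woken eta S x" "0 < l" "l \<le> fst x"
  shows "\<exists>k i. k < l \<and> woken eta S (k, i) \<and> visits k (S (k, i)) (int l)"
  using assms
proof (induction arbitrary: l rule: woken.induct)
  case (wake k i l' i')
  show ?case
  proof (cases "k < l")
    case True
    then have "visits k (S (k, i)) (int l)"
      using visits_intermediate[OF wake.hyps(2)] wake.prems by simp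
    then show ?thesis using True wake.hyps(1) by blast
  next
    case False
    then show ?thesis using wake.IH[of l] wake.prems by simp
  qed
qed simp

lemma woken_iff:
  assumes "0 < k"
  shows "woken eta S (k, i) \<longleftrightarrow> i < eta k \<and> hitters eta S k \<noteq> {}"
proof
  assume w: "woken eta S (k, i)"
  then have "hitters eta S k \<noteq> {}"
    using woken_passes_left[OF w assms] by (auto simp: hitters_def)
  moreover have "i < eta k" using w assms by (cases rule: woken.cases) auto
  ultimately show "i < eta k \<and> hitters eta S k \<noteq> {}" by simp
next
  assume "i < eta k \<and> hitters eta S k \<noteq> {}"
  then show "woken eta S (k, i)"
    using assms by (auto simp: hitters_def intro: woken.wake)
qed

lemma woken_origin_iff: "woken eta S (0, i) \<longleftrightarrow> i = 0"
  by (auto elim: woken.cases intro: woken.origin)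

lemma visits_Suc_iff_residual:
  assumes "fst x \<le> j"
  shows "visits (fst x) (S x) (int (Suc j)) \<longleftrightarrow> 1 \<le> residual S j x"
proof -
  have "visits (fst x) (S x) (int (Suc j)) \<longleftrightarrow> enat (Suc (j - fst x)) \<le> max_displacement (S x)"
    using assms by (simp add: visits_shift visits_iff_le_max_displacement Suc_diff_le del: of_nat_Suc)
  also have "\<dots> \<longleftrightarrow> 1 \<le> residual S j x"
    unfolding residual_def by (cases "max_displacement (S x)") (auto simp: one_enat_def)
  finally show ?thesis .
qed

lemma residual_Suc: "fst x \<le> j \<Longrightarrow> residual S (Suc j) x = residual S j x - 1"
  unfolding residual_def by (cases "max_displacement (S x)") (auto simp: one_enat_def Suc_diff_le)

lemma counted_fst_le: "x \<in> counted eta S j \<Longrightarrow> fst x \<le> j"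
  and counted_fst_less: "x \<in> counted eta S j \<Longrightarrow> 0 < j \<Longrightarrow> fst x < j"
  by (auto simp: counted_def hitters_def split: if_splits)

lemma counted_Suc:
  "counted eta S (Suc j) = {x \<in> counted eta S j. visits (fst x) (S x) (int (Suc j))} \<union>
     (if 0 < j \<and> counted eta S j \<noteq> {}
      then (\<lambda>i. (j, i)) ` {i. i < eta j \<and> visits j (S (j, i)) (int (Suc j))} else {})"
proof (cases "j = 0")
  case True
  then show ?thesis by (auto simp: counted_def hitters_def woken_origin_iff intro: woken.origin)
next
  case False
  have "(k, i) \<in> hitters eta S (Suc j) \<longleftrightarrow>
      (k, i) \<in> hitters eta S j \<and> visits k (S (k, i)) (int (Suc j)) \<or>
      k = j \<and> hitters eta S j \<noteq> {} \<and> i < eta j \<and> visits j (S (j, i)) (int (Suc j))" for k i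
  proof -
    have "visits k (S (k, i)) (int (Suc j)) \<Longrightarrow> k < j \<Longrightarrow> visits k (S (k, i)) (int j)"
      using visits_intermediate[of k "S (k, i)" "int (Suc j)" "int j"] by simp
    then show ?thesis
      using woken_iff[of j eta S i] False by (auto simp: hitters_def less_Suc_eq)
  qed
  then show ?thesis using False by (auto simp: counted_def)
qed

lemma advance_map_residual:
  assumes "\<forall>x\<in>set xs. fst x \<le> j"
  shows "advance (map (residual S j) xs) =
    map (residual S (Suc j)) (filter (\<lambda>x. visits (fst x) (S x) (int (Suc j))) xs)"
  using assms
  by (induction xs) (auto simp: advance_def visits_Suc_iff_residual residual_Suc simp del: of_nat_Suc)

lemma residuals_enumerate:
  "\<exists>xs. distinct xs \<and> set xs = counted eta S j \<and> residuals eta S j = map (residual S j) xs"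
proof (induction j)
  case 0
  show ?case by (intro exI[of _ "[(0, 0)]"]) (simp add: counted_def residual_def)
next
  case (Suc j)
  then obtain xs where xs: "distinct xs" "set xs = counted eta S j" "residuals eta S j = map (residual S j) xs"
    by blast
  define P where "P x \<longleftrightarrow> visits (fst x) (S x) (int (Suc j))" for x
  define new where "new = (if 0 < j \<and> xs \<noteq> [] then filter P (map (\<lambda>i. (j, i)) [0..<eta j]) else [])"
  have "advance (residuals eta S j) = map (residual S (Suc j)) (filter P xs)"
    using xs(2) counted_fst_le unfolding xs(3) P_def by (intro advance_map_residual) auto
  moreover have "advance (site_displacements eta S j) =
      map (residual S (Suc j)) (filter P (map (\<lambda>i. (j, i)) [0..<eta j]))" if "0 < j"
  proof -
    have "site_displacements eta S j = map (residual S j) (map (\<lambda>i. (j, i)) [0..<eta j])"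
      using that by (simp add: site_displacements_def residual_def)
    moreover have "\<forall>x\<in>set (map (\<lambda>i. (j, i)) [0..<eta j]). fst x \<le> j" by auto
    ultimately show ?thesis unfolding P_def by (simp only: advance_map_residual)
  qed
  ultimately have "residuals eta S (Suc j) = map (residual S (Suc j)) (filter P xs @ new)"
    using xs(3) by (simp add: next_residuals_def new_def)
  moreover have "set (filter P xs @ new) = counted eta S (Suc j)"
    unfolding counted_Suc new_def P_def xs(2)[symmetric] by auto
  moreover have "distinct (filter P xs @ new)"
  proof -
    have "fst x < j" if "x \<in> set xs" "0 < j" for x
      using counted_fst_less[of x eta S j] xs(2) that by simp
    then show ?thesis
      using xs(1) by (fastforce simp: new_def distinct_map inj_on_def)
  qed
  ultimately show ?case by blast
qed

lemma frog_M_eq_length_residuals: "frog_M (eta, S) j = length (residuals eta S j)"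
proof -
  obtain xs where "distinct xs" "set xs = counted eta S j" "residuals eta S j = map (residual S j) xs"
    using residuals_enumerate by blast
  then show ?thesis
    using distinct_card[of xs] by (simp add: frog_M_def counted_def hitters_def split: if_splits)
qed


lemma residual_counts_residuals:
  "residual_counts j (residuals eta S j) (map (site_displacements eta S) [j..<j + n]) =
    map (\<lambda>i. length (residuals eta S i)) [j..<Suc (j + n)]"
proof (induction n arbitrary: j)
  case (Suc n)
  have "[j..<j + Suc n] = j # [Suc j..<Suc j + n]" "[j..<Suc (j + Suc n)] = j # [Suc j..<Suc (Suc j + n)]"
    by (simp_all add: upt_rec)
  then show ?case using Suc[of "Suc j"] by simp
qed simp


section \<open>The joint law of the displacement data\<close>

lemma pmf_replicate_pmf:
  "pmf (replicate_pmf e g) xs = (if length xs = e then \<Prod>i<e. pmf g (xs ! i) else 0)"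
proof (induction e arbitrary: xs)
  case 0
  then show ?case by (simp add: indicator_def)
next
  case (Suc e)
  show ?case
  proof (cases xs)
    case Nil
    then show ?thesis by (simp add: pmf_eq_0_set_pmf set_replicate_pmf)
  next
    case (Cons x xs')
    have "pmf (replicate_pmf (Suc e) g) xs = (\<integral>y. indicator {x} y * pmf (replicate_pmf e g) xs' \<partial>measure_pmf g)"
      unfolding replicate_pmf_Suc_map Cons pmf_bind pmf_map_Cons
      by (intro Bochner_Integration.integral_cong) (auto simp: indicator_def)
    also have "\<dots> = pmf g x * pmf (replicate_pmf e g) xs'"
      by (simp add: measure_pmf_single)
    finally show ?thesis
      using Suc[of xs'] Cons by (simp add: prod.lessThan_Suc_shift del: prod.lessThan_Suc)
  qed
qed

lemma pmf_site_law:
  "pmf (site_law p f k) L = (if k = 0 then indicator {[]} L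
     else pmf (poiss (f k)) (length L) * (\<Prod>i<length L. pmf (egeometric_pmf (drift_ratio p)) (L ! i)))"
proof (cases "k = 0")
  case False
  have "pmf (site_law p f k) L = (\<integral>e. indicator {length L} e *
      (\<Prod>i<length L. pmf (egeometric_pmf (drift_ratio p)) (L ! i)) \<partial>measure_pmf (poiss (f k)))"
    using False unfolding site_law_def if_not_P[OF False] pmf_bind pmf_replicate_pmf
    by (intro Bochner_Integration.integral_cong) (auto simp: indicator_def)
  then show ?thesis using False by (simp add: measure_pmf_single)
qed (simp add: site_law_def indicator_def)

lemma pmf_sites_law:
  "pmf (sites_law p f j n) Ls = (if length Ls = n then \<Prod>i<n. pmf (site_law p f (j + i)) (Ls ! i) else 0)"
proof (induction n arbitrary: j Ls)
  case 0
  then show ?case by (simp add: indicator_def)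
next
  case (Suc n)
  show ?case
  proof (cases Ls)
    case Nil
    then show ?thesis by (auto simp: pmf_eq_0_set_pmf)
  next
    case (Cons L Ls')
    have inj: "inj (\<lambda>(L, Ls). L # Ls)" by (auto simp: inj_def)
    have "pmf (sites_law p f j (Suc n)) Ls = pmf (site_law p f j) L * pmf (sites_law p f (Suc j) n) Ls'"
      unfolding Cons sites_law.simps using pmf_map_inj'[OF inj, of _ "(L, Ls')"] by (simp add: pmf_pair)
    then show ?thesis
      using Suc[of "Suc j" Ls'] Cons by (simp add: prod.lessThan_Suc_shift del: prod.lessThan_Suc)
  qed
qed

text \<open>The path \<open>M\<^sub>0, \<dots>, M\<^sub>n\<close> is a function of these data; their law is computed on the
  cylinder sets of \<open>frog_space\<close> that are their point preimages.\<close>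

definition displacement_data ::
  "nat \<Rightarrow> (nat \<Rightarrow> nat) \<times> (nat \<times> nat \<Rightarrow> nat \<Rightarrow> bool) \<Rightarrow> enat \<times> enat list list" where
  "displacement_data n \<omega> =
    (max_displacement (snd \<omega> (0, 0)), map (site_displacements (fst \<omega>) (snd \<omega>)) [0..<n])"

lemma frog_M_path:
  "residual_counts 0 [fst (displacement_data n \<omega>)] (snd (displacement_data n \<omega>)) =
    map (frog_M \<omega>) [0..<Suc n]"
  using residual_counts_residuals[of 0 "fst \<omega>" "snd \<omega>" n]
  by (simp add: displacement_data_def frog_M_eq_length_residuals[of "fst \<omega>" "snd \<omega>", simplified])

abbreviation count_measures :: "(nat \<Rightarrow> real) \<Rightarrow> nat \<Rightarrow> nat measure" where
  "count_measures f \<equiv> \<lambda>j. measure_pmf (poiss (if j = 0 then 0 else f j))"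

abbreviation walks_measure :: "real \<Rightarrow> (nat \<times> nat \<Rightarrow> nat \<Rightarrow> bool) measure" where
  "walks_measure p \<equiv> PiM UNIV (\<lambda>_::nat \<times> nat. bernoulli_seq p)"

definition data_frogs :: "nat \<Rightarrow> enat list list \<Rightarrow> (nat \<times> nat) set" where
  "data_frogs n Ls = insert (0, 0) (SIGMA k:{1..<n}. {..<length (Ls ! k)})"

definition data_value :: "enat \<Rightarrow> enat list list \<Rightarrow> nat \<times> nat \<Rightarrow> enat" where
  "data_value d Ls x = (if x = (0, 0) then d else Ls ! fst x ! snd x)"

definition count_cylinder :: "(nat \<Rightarrow> real) \<Rightarrow> nat \<Rightarrow> enat list list \<Rightarrow> (nat \<Rightarrow> nat) set" where
  "count_cylinder f n Ls = prod_emb UNIV (count_measures f) {1..<n} (\<Pi>\<^sub>E k\<in>{1..<n}. {length (Ls ! k)})"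

definition displacement_cylinder ::
  "real \<Rightarrow> nat \<Rightarrow> enat \<Rightarrow> enat list list \<Rightarrow> (nat \<times> nat \<Rightarrow> nat \<Rightarrow> bool) set" where
  "displacement_cylinder p n d Ls = prod_emb UNIV (\<lambda>_. bernoulli_seq p) (data_frogs n Ls)
     (\<Pi>\<^sub>E x\<in>data_frogs n Ls. {s \<in> space (bernoulli_seq p). max_displacement s = data_value d Ls x})"

lemma finite_data_frogs: "finite (data_frogs n Ls)"
  by (simp add: data_frogs_def)

lemma map_upt_eq_iff: "map g [0..<n] = xs \<longleftrightarrow> length xs = n \<and> (\<forall>k<n. g k = xs ! k)"
  by (auto simp: list_eq_iff_nth_eq)

lemma site_displacements_eq_iff:
  "site_displacements eta S k = L \<longleftrightarrow> (if k = 0 then L = [] else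
    eta k = length L \<and> (\<forall>i<length L. max_displacement (S (k, i)) = L ! i))"
  unfolding site_displacements_def by (auto simp: map_upt_eq_iff)

lemma displacement_data_eq_iff:
  "displacement_data n (eta, S) = (d, Ls) \<longleftrightarrow>
    (length Ls = n \<and> (0 < n \<longrightarrow> Ls ! 0 = [])) \<and> (\<forall>k\<in>{1..<n}. eta k = length (Ls ! k)) \<and>
    max_displacement (S (0, 0)) = d \<and>
    (\<forall>k\<in>{1..<n}. \<forall>i<length (Ls ! k). max_displacement (S (k, i)) = Ls ! k ! i)"
proof -
  have "displacement_data n (eta, S) = (d, Ls) \<longleftrightarrow>
      max_displacement (S (0, 0)) = d \<and> length Ls = n \<and> (\<forall>k<n. site_displacements eta S k = Ls ! k)"
    by (simp add: displacement_data_def map_upt_eq_iff)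
  also have "(\<forall>k<n. site_displacements eta S k = Ls ! k) \<longleftrightarrow> (0 < n \<longrightarrow> Ls ! 0 = []) \<and>
      (\<forall>k\<in>{1..<n}. eta k = length (Ls ! k) \<and>
        (\<forall>i<length (Ls ! k). max_displacement (S (k, i)) = Ls ! k ! i))"
    unfolding site_displacements_eq_iff by (auto simp: Ball_def)
  finally show ?thesis by auto
qed

lemma mem_count_cylinder_iff: "eta \<in> count_cylinder f n Ls \<longleftrightarrow> (\<forall>k\<in>{1..<n}. eta k = length (Ls ! k))"
  by (auto simp: count_cylinder_def prod_emb_iff)

lemma mem_displacement_cylinder_iff:
  "S \<in> displacement_cylinder p n d Ls \<longleftrightarrow> S \<in> space (walks_measure p) \<and>
    max_displacement (S (0, 0)) = d \<and>
    (\<forall>k\<in>{1..<n}. \<forall>i<length (Ls ! k). max_displacement (S (k, i)) = Ls ! k ! i)"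
  by (auto simp: displacement_cylinder_def prod_emb_iff space_PiM data_frogs_def data_value_def PiE_iff)

lemma displacement_data_preimage:
  "{\<omega> \<in> space (frog_space p f). displacement_data n \<omega> = (d, Ls)} =
    (if length Ls = n \<and> (0 < n \<longrightarrow> Ls ! 0 = [])
     then count_cylinder f n Ls \<times> displacement_cylinder p n d Ls else {})"
  by (auto simp: frog_space_def space_pair_measure displacement_data_eq_iff mem_count_cylinder_iff
      mem_displacement_cylinder_iff space_PiM)

lemma count_cylinder_sets: "count_cylinder f n Ls \<in> sets (PiM UNIV (count_measures f))"
  unfolding count_cylinder_def by (rule sets_PiM_I) auto

lemma displacement_cylinder_sets: "displacement_cylinder p n d Ls \<in> sets (walks_measure p)"
  unfolding displacement_cylinder_def by (rule sets_PiM_I) (auto simp: finite_data_frogs)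

lemma emeasure_count_cylinder:
  "emeasure (PiM UNIV (count_measures f)) (count_cylinder f n Ls) =
    (\<Prod>k\<in>{1..<n}. ennreal (pmf (poiss (f k)) (length (Ls ! k))))"
proof -
  have "emeasure (PiM UNIV (count_measures f)) (count_cylinder f n Ls) =
      (\<Prod>k\<in>{1..<n}. emeasure (count_measures f k) {length (Ls ! k)})"
    unfolding count_cylinder_def by (rule emeasure_PiM_emb) (auto simp: prob_space_measure_pmf)
  then show ?thesis by (simp add: emeasure_pmf_single)
qed

lemma (in left_drift) emeasure_displacement_cylinder:
  "emeasure (walks_measure p) (displacement_cylinder p n d Ls) =
    (\<Prod>x\<in>data_frogs n Ls. ennreal (pmf (egeometric_pmf q) (data_value d Ls x)))"
proof -
  interpret prob_space "bernoulli_seq p" by (intro prob_space_PiM prob_space_measure_pmf)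
  have "emeasure (walks_measure p) (displacement_cylinder p n d Ls) =
      (\<Prod>x\<in>data_frogs n Ls. emeasure (bernoulli_seq p)
        {s \<in> space (bernoulli_seq p). max_displacement s = data_value d Ls x})"
    unfolding displacement_cylinder_def
    by (rule emeasure_PiM_emb) (auto simp: finite_data_frogs prob_space_axioms)
  then show ?thesis by (simp add: emeasure_eq_measure prob_max_displacement_eq)
qed

lemma pmf_displacement_law:
  assumes "length Ls = n" "0 < n \<longrightarrow> Ls ! 0 = []"
  shows "pmf (pair_pmf (egeometric_pmf (drift_ratio p)) (sites_law p f 0 n)) (d, Ls) =
    (\<Prod>k\<in>{1..<n}. pmf (poiss (f k)) (length (Ls ! k))) *
    (\<Prod>x\<in>data_frogs n Ls. pmf (egeometric_pmf (drift_ratio p)) (data_value d Ls x))"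
proof -
  define G where "G = pmf (egeometric_pmf (drift_ratio p))"
  define Sg where "Sg = (SIGMA k:{1..<n}. {..<length (Ls ! k)})"
  have "(\<Prod>x\<in>data_frogs n Ls. G (data_value d Ls x)) = G d * (\<Prod>x\<in>Sg. G (Ls ! fst x ! snd x))"
  proof -
    have "(0, 0) \<notin> Sg" "finite Sg" by (auto simp: Sg_def)
    then have "(\<Prod>x\<in>data_frogs n Ls. G (data_value d Ls x)) =
        G (data_value d Ls (0, 0)) * (\<Prod>x\<in>Sg. G (data_value d Ls x))"
      unfolding data_frogs_def Sg_def[symmetric] by simp
    also have "(\<Prod>x\<in>Sg. G (data_value d Ls x)) = (\<Prod>x\<in>Sg. G (Ls ! fst x ! snd x))"
      by (intro prod.cong refl) (auto simp: data_value_def Sg_def)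
    finally show ?thesis by (simp add: data_value_def)
  qed
  also have "(\<Prod>x\<in>Sg. G (Ls ! fst x ! snd x)) = (\<Prod>k\<in>{1..<n}. \<Prod>t<length (Ls ! k). G (Ls ! k ! t))"
    unfolding Sg_def by (subst prod.Sigma) (auto simp: case_prod_beta)
  finally have frogs: "(\<Prod>x\<in>data_frogs n Ls. G (data_value d Ls x)) =
      G d * (\<Prod>k\<in>{1..<n}. \<Prod>t<length (Ls ! k). G (Ls ! k ! t))" .
  have "(\<Prod>i<n. pmf (site_law p f i) (Ls ! i)) = (\<Prod>i\<in>{1..<n}. pmf (site_law p f i) (Ls ! i))"
  proof (cases n)
    case (Suc n')
    then have "{..<n} = insert 0 {1..<n}" by auto
    then show ?thesis using assms Suc by (simp add: pmf_site_law)
  qed simp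
  also have "\<dots> = (\<Prod>k\<in>{1..<n}. pmf (poiss (f k)) (length (Ls ! k)) * (\<Prod>t<length (Ls ! k). G (Ls ! k ! t)))"
    by (intro prod.cong refl) (auto simp: pmf_site_law G_def)
  finally show ?thesis
    using assms unfolding pmf_pair pmf_sites_law G_def[symmetric] frogs prod.distrib
    by (simp add: ac_simps)
qed

lemma pmf_displacement_law_eq_0:
  assumes "\<not> (length Ls = n \<and> (0 < n \<longrightarrow> Ls ! 0 = []))"
  shows "pmf (pair_pmf (egeometric_pmf (drift_ratio p)) (sites_law p f 0 n)) (d, Ls) = 0"
  using assms by (auto simp: pmf_pair pmf_sites_law pmf_site_law intro!: bexI[of _ 0])


section \<open>The Markov property\<close>

lemma prob_space_frog_space: "prob_space (frog_space p f)"
  unfolding frog_space_def by (intro prob_space_pair prob_space_PiM prob_space_measure_pmf)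

lemma displacement_data_preimage_sets:
  "{\<omega> \<in> space (frog_space p f). displacement_data n \<omega> = y} \<in> sets (frog_space p f)"
proof -
  obtain d Ls where y: "y = (d, Ls)" by force
  show ?thesis
    unfolding y displacement_data_preimage unfolding frog_space_def
    using count_cylinder_sets displacement_cylinder_sets by auto
qed

lemma measurable_displacement_data:
  "displacement_data n \<in> measurable (frog_space p f) (count_space UNIV)"
proof (subst measurable_count_space_eq_countable)
  show "countable (UNIV :: (enat \<times> enat list list) set)" by simp
  have "displacement_data n -` {y} \<inter> space (frog_space p f) =
      {\<omega> \<in> space (frog_space p f). displacement_data n \<omega> = y}" for y
    by auto
  then show "displacement_data n \<in> space (frog_space p f) \<rightarrow> UNIV \<and>
      (\<forall>y\<in>UNIV. displacement_data n -` {y} \<inter> space (frog_space p f) \<in> sets (frog_space p f))"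
    using displacement_data_preimage_sets by simp
qed

context left_drift
begin

lemma emeasure_displacement_data_eq:
  "emeasure (frog_space p f) {\<omega> \<in> space (frog_space p f). displacement_data n \<omega> = (d, Ls)} =
    pmf (pair_pmf (egeometric_pmf q) (sites_law p f 0 n)) (d, Ls)"
proof (cases "length Ls = n \<and> (0 < n \<longrightarrow> Ls ! 0 = [])")
  case True
  interpret W: prob_space "walks_measure p" by (intro prob_space_PiM prob_space_measure_pmf)
  have "emeasure (frog_space p f) {\<omega> \<in> space (frog_space p f). displacement_data n \<omega> = (d, Ls)} =
      emeasure (PiM UNIV (count_measures f)) (count_cylinder f n Ls) *
      emeasure (walks_measure p) (displacement_cylinder p n d Ls)"
    unfolding displacement_data_preimage if_P[OF True] unfolding frog_space_def
    by (rule W.emeasure_pair_measure_Times[OF count_cylinder_sets displacement_cylinder_sets])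
  then show ?thesis
    using True
    by (simp add: emeasure_count_cylinder emeasure_displacement_cylinder pmf_displacement_law
        prod_ennreal ennreal_mult prod_nonneg)
next
  case False
  then show ?thesis
    unfolding displacement_data_preimage if_not_P[OF False] by (simp add: pmf_displacement_law_eq_0)
qed

lemma distr_displacement_data:
  "distr (frog_space p f) (count_space UNIV) (displacement_data n) =
    measure_pmf (pair_pmf (egeometric_pmf q) (sites_law p f 0 n))"
proof (rule measure_eqI_countable[where A = UNIV])
  fix y :: "enat \<times> enat list list"
  have "displacement_data n -` {y} \<inter> space (frog_space p f) =
      {\<omega> \<in> space (frog_space p f). displacement_data n \<omega> = y}"
    by auto
  then show "emeasure (distr (frog_space p f) (count_space UNIV) (displacement_data n)) {y} =
      emeasure (measure_pmf (pair_pmf (egeometric_pmf q) (sites_law p f 0 n))) {y}"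
    using emeasure_displacement_data_eq[where d = "fst y" and Ls = "snd y"]
    by (simp add: emeasure_distr[OF measurable_displacement_data] emeasure_pmf_single)
qed simp_all

lemma residual_counts_displacement_law:
  assumes "\<forall>j>0. 0 \<le> f j"
  shows "map_pmf (\<lambda>y. residual_counts 0 [fst y] (snd y)) (pair_pmf (egeometric_pmf q) (sites_law p f 0 n)) =
    path_pmf (frog_kernel p f) 0 1 n"
proof -
  have "map_pmf (\<lambda>y. residual_counts 0 [fst y] (snd y)) (pair_pmf (egeometric_pmf q) (sites_law p f 0 n)) =
      replicate_pmf 1 (egeometric_pmf q) \<bind> (\<lambda>R. map_pmf (residual_counts 0 R) (sites_law p f 0 n))"
    by (simp add: pair_pmf_def map_bind_pmf map_pmf_def bind_assoc_pmf bind_return_pmf replicate_pmf_1)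
  also have "\<dots> = path_pmf (frog_kernel p f) 0 1 n"
    using assms by (intro residual_counts_law) simp_all
  finally show ?thesis .
qed

lemma markov_chain_frog_M:
  assumes "\<forall>j>0. 0 \<le> f j"
  shows "markov_chain_nat (frog_space p f) frog_M (return_pmf 1) (frog_kernel p f)"
  unfolding markov_chain_nat_def
proof (intro allI conjI)
  fix n and m :: "nat \<Rightarrow> nat"
  define B where "B = (\<lambda>y. residual_counts 0 [fst y] (snd y)) -` {map m [0..<Suc n]}"
  have event: "{\<omega> \<in> space (frog_space p f). \<forall>i\<le>n. frog_M \<omega> i = m i} =
      displacement_data n -` B \<inter> space (frog_space p f)"
  proof (intro set_eqI)
    fix \<omega>
    have "displacement_data n \<omega> \<in> B \<longleftrightarrow> map (frog_M \<omega>) [0..<Suc n] = map m [0..<Suc n]"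
      unfolding B_def vimage_eq singleton_iff frog_M_path ..
    then show "\<omega> \<in> {\<omega> \<in> space (frog_space p f). \<forall>i\<le>n. frog_M \<omega> i = m i} \<longleftrightarrow>
        \<omega> \<in> displacement_data n -` B \<inter> space (frog_space p f)"
      by (auto simp: less_Suc_eq_le simp del: upt_Suc)
  qed
  then show "{\<omega> \<in> space (frog_space p f). \<forall>i\<le>n. frog_M \<omega> i = m i} \<in> sets (frog_space p f)"
    using measurable_displacement_data by (simp add: measurable_sets)
  have "measure (frog_space p f) {\<omega> \<in> space (frog_space p f). \<forall>i\<le>n. frog_M \<omega> i = m i} =
      measure (distr (frog_space p f) (count_space UNIV) (displacement_data n)) B"
    unfolding event by (rule measure_distr[symmetric, OF measurable_displacement_data]) simp
  also have "\<dots> = pmf (path_pmf (frog_kernel p f) 0 1 n) (map m [0..<Suc n])"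
    unfolding distr_displacement_data residual_counts_displacement_law[OF assms, symmetric]
    by (simp add: B_def pmf_map)
  finally show "measure (frog_space p f) {\<omega> \<in> space (frog_space p f). \<forall>i\<le>n. frog_M \<omega> i = m i} =
      pmf (return_pmf 1) (m 0) * (\<Prod>i<n. pmf (frog_kernel p f i (m i)) (m (Suc i)))"
    unfolding pmf_path_pmf by simp
qed

end

theorem proposition5:
  fixes p :: real and f :: "nat \<Rightarrow> real"
  assumes "1 / 2 < p" and "p < 1"
    and "\<forall>j>0. 0 \<le> f j"
  shows "prob_space (frog_space p f)
    \<and> markov_chain_nat (frog_space p f) frog_M (return_pmf 1) (frog_kernel p f)"
proof -
  interpret left_drift p using assms by unfold_locales
  show ?thesis using prob_space_frog_space markov_chain_frog_M assms(3) by blast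
qed


end
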